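(* Let $(X,d)$ be a compact metric space with $\operatorname{diam}(X,d)=1/2$, let $a\ge\lambda\ge6$ and $L>1$, let $\theta\in\mathcal J(X,d)$, and let $\mu$ be a $q$-homogeneous measure on $(X,\theta)$. Let $\mathcal S$ be a hyperbolic filling with parameters $a,\lambda$. For $v\in\mathcal S$ and $k\in\mathbb N$ define $\rho_v:\mathcal S_{\pi_2(v)+k}\to[0,\infty)$ by $\rho_v(w)=\big(\mu(B_w)/\mu(B_v)\big)^{1/q}$ if $B_w\cap B_d(\pi_1(v),(L+1)a^{-\pi_2(v)})\ne\emptyset$ and $w\in\gamma$ for some $\gamma\in\Gamma_{k,L}(v)$, and $\rho_v(w)=0$ otherwise. Then there exist $c>0$ and $k_0\in\mathbb N$, depending only on $d,\theta,\mu,a,L$, such that for all $k\ge k_0$, all $v\in\mathcal S$ and all $\gamma\in\Gamma_{k,L}(v)$, $\sum_{w\in\gamma}\rho_v(w)\ge c$.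
   Context: Hyperbolic filling: $X_0\subset X_1\subset\cdots$ increasing, each $X_n$ a maximal $a^{-n}$-separated subset of $X$; $\mathcal S_n=\{(x,n):x\in X_n\}$, $\mathcal S=\bigcup_n\mathcal S_n$, $\pi_1(x,n)=x$, $\pi_2(x,n)=n$, $B_v=B_d(\pi_1(v),a^{-\pi_2(v)})$ (open $d$-ball). $G_n$ is the graph on $\mathcal S_n$ in which distinct $v,w$ are adjacent iff $B(\pi_1(v),\lambda a^{-n})\cap B(\pi_1(w),\lambda a^{-n})\neq\emptyset$. $\Gamma_{k,L}(v)$ is the set of paths $(v_1,\dots,v_n)$ in $G_{\pi_2(v)+k}$ (consecutive vertices adjacent) with $\pi_1(v_1)\in B_v$ and $\pi_1(v_n)\notin B_d(\pi_1(v),La^{-\pi_2(v)})$. The sum $\sum_{w\in\gamma}$ runs over the entries of $\gamma$. $\mathcal J(X,d)$: metrics $\theta$ on $X$ such that $\theta(x,a)/\theta(x,b)\le\eta(d(x,a)/d(x,b))$ for all $x,a,b$, $x\ne b$, for some homeomorphism $\eta:[0,\infty)\to[0,\infty)$. A nonzero Borel measure $\mu$ is $q$-homogeneous on $(X,\theta)$ if there is $C$ with $\mu(B_\theta(x,R))\le C(R/r)^q\mu(B_\theta(x,r))$ for all $x\in X$, $0<r\le R$. *)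

theory Defs
  imports "HOL-Analysis.Analysis" "HOL-Probability.Probability"
begin

definition mdiam :: "'a set \<Rightarrow> ('a \<Rightarrow> 'a \<Rightarrow> real) \<Rightarrow> real" where
  "mdiam X d = Sup {d x y | x y. x \<in> X \<and> y \<in> X}"

definition in_J :: "'a set \<Rightarrow> ('a \<Rightarrow> 'a \<Rightarrow> real) \<Rightarrow> ('a \<Rightarrow> 'a \<Rightarrow> real) \<Rightarrow> bool" where
  "in_J X d \<theta> \<longleftrightarrow> Metric_space X \<theta> \<and>
     (\<exists>\<eta> \<eta>'. homeomorphism {0::real..} {0..} \<eta> \<eta>' \<and>
        (\<forall>x\<in>X. \<forall>a\<in>X. \<forall>b\<in>X. x \<noteq> b \<longrightarrow> \<theta> x a / \<theta> x b \<le> \<eta> (d x a / d x b)))"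

definition metric_borel_sets :: "'a set \<Rightarrow> ('a \<Rightarrow> 'a \<Rightarrow> real) \<Rightarrow> 'a set set" where
  "metric_borel_sets X \<theta> = sigma_sets X {U. openin (Metric_space.mtopology X \<theta>) U}"

definition q_homogeneous :: "'a set \<Rightarrow> ('a \<Rightarrow> 'a \<Rightarrow> real) \<Rightarrow> 'a measure \<Rightarrow> real \<Rightarrow> bool" where
  "q_homogeneous X \<theta> \<mu> q \<longleftrightarrow>
     space \<mu> = X \<and> sets \<mu> = metric_borel_sets X \<theta> \<and> emeasure \<mu> X \<noteq> 0 \<and>
     (\<exists>C::real. \<forall>x\<in>X. \<forall>r R. 0 < r \<and> r \<le> R \<longrightarrow>
        emeasure \<mu> (Metric_space.mball X \<theta> x R)
          \<le> ennreal (C * (R / r) powr q) * emeasure \<mu> (Metric_space.mball X \<theta> x r))"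

definition max_separated :: "'a set \<Rightarrow> ('a \<Rightarrow> 'a \<Rightarrow> real) \<Rightarrow> real \<Rightarrow> 'a set \<Rightarrow> bool" where
  "max_separated X d \<epsilon> A \<longleftrightarrow> A \<subseteq> X \<and>
     (\<forall>x\<in>A. \<forall>y\<in>A. x \<noteq> y \<longrightarrow> d x y \<ge> \<epsilon>) \<and>
     (\<forall>z\<in>X - A. \<exists>x\<in>A. d x z < \<epsilon>)"

definition hyp_filling :: "'a set \<Rightarrow> ('a \<Rightarrow> 'a \<Rightarrow> real) \<Rightarrow> real \<Rightarrow> (nat \<Rightarrow> 'a set) \<Rightarrow> bool" where
  "hyp_filling X d a Xs \<longleftrightarrow> incseq Xs \<and> (\<forall>n. max_separated X d (a powi (- int n)) (Xs n))"

definition filling_S :: "(nat \<Rightarrow> 'a set) \<Rightarrow> nat \<Rightarrow> ('a \<times> nat) set" where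
  "filling_S Xs n = {(x, n) | x. x \<in> Xs n}"

definition filling_all :: "(nat \<Rightarrow> 'a set) \<Rightarrow> ('a \<times> nat) set" where
  "filling_all Xs = (\<Union>n. filling_S Xs n)"

definition vball :: "'a set \<Rightarrow> ('a \<Rightarrow> 'a \<Rightarrow> real) \<Rightarrow> real \<Rightarrow> 'a \<times> nat \<Rightarrow> 'a set" where
  "vball X d a v = Metric_space.mball X d (fst v) (a powi (- int (snd v)))"

definition G_adj :: "'a set \<Rightarrow> ('a \<Rightarrow> 'a \<Rightarrow> real) \<Rightarrow> real \<Rightarrow> real \<Rightarrow> (nat \<Rightarrow> 'a set) \<Rightarrow> nat
     \<Rightarrow> 'a \<times> nat \<Rightarrow> 'a \<times> nat \<Rightarrow> bool" where
  "G_adj X d a lam Xs n v w \<longleftrightarrow> v \<in> filling_S Xs n \<and> w \<in> filling_S Xs n \<and> v \<noteq> w \<and>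
     Metric_space.mball X d (fst v) (lam * a powi (- int n)) \<inter>
     Metric_space.mball X d (fst w) (lam * a powi (- int n)) \<noteq> {}"

definition G_path :: "'a set \<Rightarrow> ('a \<Rightarrow> 'a \<Rightarrow> real) \<Rightarrow> real \<Rightarrow> real \<Rightarrow> (nat \<Rightarrow> 'a set) \<Rightarrow> nat
     \<Rightarrow> ('a \<times> nat) list \<Rightarrow> bool" where
  "G_path X d a lam Xs n p \<longleftrightarrow> p \<noteq> [] \<and> set p \<subseteq> filling_S Xs n \<and>
     (\<forall>i. Suc i < length p \<longrightarrow> G_adj X d a lam Xs n (p ! i) (p ! Suc i))"

definition Gamma :: "'a set \<Rightarrow> ('a \<Rightarrow> 'a \<Rightarrow> real) \<Rightarrow> real \<Rightarrow> real \<Rightarrow> (nat \<Rightarrow> 'a set) \<Rightarrow> nat \<Rightarrow> real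
     \<Rightarrow> 'a \<times> nat \<Rightarrow> ('a \<times> nat) list set" where
  "Gamma X d a lam Xs k L v = {p. G_path X d a lam Xs (snd v + k) p \<and>
      fst (hd p) \<in> vball X d a v \<and>
      fst (last p) \<notin> Metric_space.mball X d (fst v) (L * a powi (- int (snd v)))}"

definition rho :: "'a set \<Rightarrow> ('a \<Rightarrow> 'a \<Rightarrow> real) \<Rightarrow> 'a measure \<Rightarrow> real \<Rightarrow> real \<Rightarrow> real \<Rightarrow> (nat \<Rightarrow> 'a set)
     \<Rightarrow> nat \<Rightarrow> real \<Rightarrow> 'a \<times> nat \<Rightarrow> 'a \<times> nat \<Rightarrow> real" where
  "rho X d \<mu> q a lam Xs k L v w =
     (if vball X d a w \<inter> Metric_space.mball X d (fst v) ((L + 1) * a powi (- int (snd v))) \<noteq> {}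
         \<and> (\<exists>\<gamma>\<in>Gamma X d a lam Xs k L v. w \<in> set \<gamma>)
      then (measure \<mu> (vball X d a w) / measure \<mu> (vball X d a v)) powr (1 / q)
      else 0)"

end

theory Submission
  imports Defs
begin

text \<open>Write \<open>v = (x, n)\<close>, \<open>r = a^-n\<close>, let \<open>y_0, y_1, ...\<close> be the centres of the vertices
  of \<open>\<gamma>\<close> and \<open>y_j\<close> the first of them outside \<open>B_d(x, L r)\<close>. Quasisymmetry makes \<open>d\<close>-balls and
  \<open>\<theta>\<close>-balls comparable: for \<open>i < j\<close> the ball \<open>B_w\<close> of the \<open>i\<close>-th vertex contains the
  \<open>\<theta>\<close>-ball about \<open>y_i\<close> of radius \<open>\<theta>(y_i, y_{i+1})/K\<close>, while \<open>B_v\<close> lies in the \<open>\<theta>\<close>-ball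
  about \<open>y_i\<close> of radius \<open>3K \<theta>(x, y_j)\<close>. By \<open>q\<close>-homogeneity the \<open>i\<close>-th term of the sum is
  thus at least \<open>min 1 (c \<theta>(y_i, y_{i+1}) / \<theta>(x, y_j))\<close>, and by the triangle inequality and
  quasisymmetry once more the \<open>\<theta>\<close>-lengths of the first \<open>j\<close> steps add up to at least
  \<open>\<theta>(x, y_j)/K\<close>. The resulting bound does not depend on \<open>k\<close>.\<close>

lemma min_one_sum_le_sum_min_one:
  fixes f :: "'b \<Rightarrow> real"
  assumes "finite A" and "\<And>i. i \<in> A \<Longrightarrow> 0 \<le> f i"
  shows "min 1 (sum f A) \<le> (\<Sum>i\<in>A. min 1 (f i))"
  using assms
proof (induction A rule: finite_induct)
  case (insert x F)
  have "0 \<le> sum f F" using insert.prems by (intro sum_nonneg) auto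
  moreover have "0 \<le> f x" using insert.prems by simp
  ultimately have "min 1 (f x + sum f F) \<le> min 1 (f x) + min 1 (sum f F)"
    by linarith
  with insert show ?case by auto
qed simp

lemma sum_nth_prefix_le_sum_list:
  fixes f :: "'b \<Rightarrow> real"
  assumes "\<And>x. x \<in> set xs \<Longrightarrow> 0 \<le> f x" and "j \<le> length xs"
  shows "(\<Sum>i<j. f (xs ! i)) \<le> (\<Sum>x\<leftarrow>xs. f x)"
proof -
  have "(\<Sum>i<j. f (xs ! i)) \<le> (\<Sum>i<length xs. f (xs ! i))"
    using assms by (intro sum_mono2) auto
  then show ?thesis by (simp add: sum_list_sum_nth atLeast0LessThan)
qed

lemma (in Metric_space) triangle_chain:
  assumes "\<And>i. i \<le> j \<Longrightarrow> y i \<in> M"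
  shows "d (y 0) (y j) \<le> (\<Sum>i<j. d (y i) (y (Suc i)))"
  using assms
proof (induction j)
  case (Suc j)
  have "d (y 0) (y (Suc j)) \<le> d (y 0) (y j) + d (y j) (y (Suc j))"
    using triangle Suc.prems by simp
  with Suc show ?case by simp
qed simp

lemma (in Metric_space) escape_dist_le:
  assumes "x \<in> M" "y \<in> M" "z \<in> M" "d x y < r" "L * r \<le> d x z" "1 < L"
  shows "(L - 1) * d x z \<le> L * d y z"
proof -
  have "d x z \<le> d x y + d y z" using triangle assms(1-3) by blast
  then have "L * (d x z - r) \<le> L * d y z"
    using assms(4,6) by (intro mult_left_mono) auto
  with assms(5) show ?thesis by (simp add: algebra_simps)
qed

lemma continuous_on_bounded_above_interval:
  fixes \<eta> :: "real \<Rightarrow> real"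
  assumes "continuous_on {0..} \<eta>"
  shows "\<exists>K\<ge>1. \<forall>t\<in>{0..M}. \<eta> t \<le> K"
proof -
  have "compact (\<eta> ` {0..M})"
    using assms by (intro compact_continuous_image) (auto elim: continuous_on_subset)
  then obtain B where "\<forall>t\<in>{0..M}. norm (\<eta> t) \<le> B"
    by (auto dest!: compact_imp_bounded simp: bounded_iff)
  then show ?thesis by (intro exI[of _ "max 1 B"]) fastforce
qed

text \<open>Only the boundedness of \<open>\<eta>\<close> on compact intervals enters the estimates, so continuity
  of \<open>\<eta>\<close> is all that is assumed of the distortion function.\<close>
locale quasisymmetric = D: Metric_space X d + T: Metric_space X \<theta> for X d \<theta> +
  fixes \<eta> :: "real \<Rightarrow> real"
  assumes eta_continuous: "continuous_on {0..} \<eta>"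
    and ratio_le: "\<And>x p z. \<lbrakk>x \<in> X; p \<in> X; z \<in> X; x \<noteq> z\<rbrakk> \<Longrightarrow> \<theta> x p / \<theta> x z \<le> \<eta> (d x p / d x z)"
begin

lemma eta_bounded: "\<exists>K\<ge>1. \<forall>t\<in>{0..M}. \<eta> t \<le> K"
  using eta_continuous by (rule continuous_on_bounded_above_interval)

lemma theta_le_of_d_le:
  assumes "x \<in> X" "p \<in> X" "z \<in> X" "x \<noteq> z"
    and "d x p \<le> M * d x z" and "\<forall>t\<in>{0..M}. \<eta> t \<le> K"
  shows "\<theta> x p \<le> K * \<theta> x z"
proof -
  have "0 < d x z" "0 < \<theta> x z"
    using assms(1,3,4) D.zero D.nonneg T.zero T.nonneg by (metis order_le_less)+
  then have "d x p / d x z \<in> {0..M}"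
    using assms(5) by (simp add: divide_le_eq)
  then have "\<theta> x p / \<theta> x z \<le> K"
    using ratio_le[OF assms(1-4)] assms(6) by fastforce
  with \<open>0 < \<theta> x z\<close> show ?thesis by (simp add: divide_le_eq)
qed

lemma theta_mball_subset_d_mball:
  assumes "y \<in> X" "p \<in> X" "0 < s" "d y p \<le> M * s"
    and "\<forall>t\<in>{0..M}. \<eta> t \<le> K" "0 < K"
  shows "T.mball y (\<theta> y p / K) \<subseteq> D.mball y s"
proof
  fix z assume z: "z \<in> T.mball y (\<theta> y p / K)"
  show "z \<in> D.mball y s"
  proof (rule ccontr)
    assume "z \<notin> D.mball y s"
    with z assms(1,3) have "s \<le> d y z" "y \<noteq> z" by auto
    have "0 \<le> M * s" using assms(4) D.nonneg[of y p] by linarith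
    then have "0 \<le> M" using assms(3) by (simp add: zero_le_mult_iff)
    with assms(4) \<open>s \<le> d y z\<close> have "d y p \<le> M * d y z"
      by (meson mult_left_mono order_trans)
    then have "\<theta> y p \<le> K * \<theta> y z"
      using theta_le_of_d_le z assms(1,2,5) \<open>y \<noteq> z\<close> by simp
    with z \<open>0 < K\<close> show False by (simp add: field_simps)
  qed
qed

lemma openin_d_mball: "openin T.mtopology (D.mball y s)"
  unfolding T.openin_mtopology
proof (intro conjI allI impI)
  fix z assume z: "z \<in> D.mball y s"
  show "\<exists>e>0. T.mball z e \<subseteq> D.mball y s"
  proof (cases "\<exists>p\<in>X. p \<noteq> z")
    case True
    then obtain p where p: "p \<in> X" "p \<noteq> z" by blast
    define e where "e = s - d y z"
    have "0 < e" "z \<in> X" using z by (auto simp: e_def)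
    obtain K where K: "K \<ge> 1" "\<forall>t\<in>{0..d z p / e}. \<eta> t \<le> K" using eta_bounded by blast
    have "T.mball z (\<theta> z p / K) \<subseteq> D.mball z e"
      using \<open>0 < e\<close> \<open>z \<in> X\<close> p K by (intro theta_mball_subset_d_mball) auto
    also have "\<dots> \<subseteq> D.mball y s"
    proof
      fix u assume "u \<in> D.mball z e"
      then show "u \<in> D.mball y s" using z D.triangle[of y z u] by (auto simp: e_def)
    qed
    finally show ?thesis
      using p \<open>z \<in> X\<close> K T.zero T.nonneg by (intro exI[of _ "\<theta> z p / K"]) (auto simp: order_le_less)
  next
    case False
    then have "T.mball z 1 \<subseteq> D.mball y s" using z by auto
    then show ?thesis by (intro exI[of _ 1]) auto
  qed
qed auto

lemma d_mball_subset_theta_mball: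
  assumes "x \<in> X" "y \<in> X" "w \<in> X" "0 < r"
    and "r \<le> d x w" "d x y \<le> d x w"
    and "1 \<le> M" "\<forall>t\<in>{0..M}. \<eta> t \<le> K" "0 < K"
  shows "D.mball x r \<subseteq> T.mball y (3 * K * \<theta> x w)"
proof
  fix z assume z: "z \<in> D.mball x r"
  have "x \<noteq> w" using assms(1,4,5) by auto
  then have "0 < \<theta> x w" using assms(1,3) T.zero T.nonneg by (metis order_le_less)
  have le_M: "t \<le> M * d x w" if "t \<le> d x w" for t
    using that mult_right_mono[OF assms(7) D.nonneg[of x w]] by simp
  have "\<theta> x z \<le> K * \<theta> x w"
    using z assms le_M[of "d x z"] \<open>x \<noteq> w\<close> by (intro theta_le_of_d_le) auto
  moreover have "\<theta> x y \<le> K * \<theta> x w"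
    using assms le_M[of "d x y"] \<open>x \<noteq> w\<close> by (intro theta_le_of_d_le) auto
  moreover have "\<theta> y z \<le> \<theta> x y + \<theta> x z"
    using T.triangle[of y x z] T.commute[of x y] z assms(1,2) by simp
  moreover have "0 < K * \<theta> x w" using assms(9) \<open>0 < \<theta> x w\<close> by simp
  ultimately have "\<theta> y z < 3 * (K * \<theta> x w)" by linarith
  then show "z \<in> T.mball y (3 * K * \<theta> x w)"
    using z assms(2) by (simp add: mult.assoc)
qed

end

locale homogeneous_measure = T: Metric_space X \<theta> + finite_measure \<mu> for X \<theta> \<mu> +
  fixes q C :: real
  assumes q_pos: "0 < q" and C_pos: "0 < C"
    and openin_measurable: "\<And>U. openin T.mtopology U \<Longrightarrow> U \<in> sets \<mu>"
    and emeasure_space_nonzero: "emeasure \<mu> X \<noteq> 0"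
    and measure_mball_le:
      "\<And>x r R. \<lbrakk>x \<in> X; 0 < r; r \<le> R\<rbrakk> \<Longrightarrow>
         measure \<mu> (T.mball x R) \<le> C * (R / r) powr q * measure \<mu> (T.mball x r)"
begin

lemma mball_measurable: "T.mball x r \<in> sets \<mu>"
  by (simp add: openin_measurable)

lemma measure_mball_pos:
  assumes "x \<in> X" "0 < e"
  shows "0 < measure \<mu> (T.mball x e)"
proof (rule ccontr)
  assume "\<not> ?thesis"
  then have zero: "measure \<mu> (T.mball x e) = 0" by (simp add: order_less_le)
  have "T.mball x (e + real n) \<in> null_sets \<mu>" for n
  proof -
    have "measure \<mu> (T.mball x (e + real n)) \<le> 0"
      using measure_mball_le[of x e "e + real n"] assms zero by simp
    then have "measure \<mu> (T.mball x (e + real n)) = 0"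
      by (simp add: order_antisym)
    then show ?thesis
      using mball_measurable by (simp add: emeasure_eq_measure null_sets_def)
  qed
  then have "(\<Union>n. T.mball x (e + real n)) \<in> null_sets \<mu>" by blast
  moreover have "(\<Union>n. T.mball x (e + real n)) = X"
  proof (intro equalityI subsetI)
    fix z assume "z \<in> X"
    obtain n where "\<theta> x z < real n" using reals_Archimedean2 by blast
    with \<open>z \<in> X\<close> assms have "z \<in> T.mball x (e + real n)" by simp
    then show "z \<in> (\<Union>n. T.mball x (e + real n))" by blast
  qed auto
  ultimately show False using emeasure_space_nonzero by (simp add: null_sets_def)
qed

lemma measure_ratio_powr_ge:
  assumes "y \<in> X" "0 \<le> \<rho>" "0 < R"
    and "T.mball y \<rho> \<subseteq> A" "A \<in> sets \<mu>"
    and "V \<subseteq> T.mball y R" "0 < measure \<mu> V"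
  shows "min 1 (C powr (-1/q) * \<rho> / R) \<le> (measure \<mu> A / measure \<mu> V) powr (1/q)"
proof -
  consider "\<rho> = 0" | "R \<le> \<rho>" | "0 < \<rho>" "\<rho> < R" using assms(2) by linarith
  then show ?thesis
  proof cases
    case 1
    then show ?thesis by simp
  next
    case 2
    then have "V \<subseteq> A" using assms(4,6) T.mball_subset_concentric by blast
    then have "1 \<le> measure \<mu> A / measure \<mu> V"
      using assms(5,7) finite_measure_mono by simp
    then have "1 \<le> (measure \<mu> A / measure \<mu> V) powr (1/q)"
      using q_pos by (intro ge_one_powr_ge_zero) auto
    then show ?thesis by linarith
  next
    case 3
    define c where "c = C powr (-1/q) * \<rho> / R"
    have "measure \<mu> V \<le> measure \<mu> (T.mball y R)"
      using assms(6) mball_measurable by (rule finite_measure_mono)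
    also have "\<dots> \<le> C * (R / \<rho>) powr q * measure \<mu> (T.mball y \<rho>)"
      using 3 assms(1) by (intro measure_mball_le) auto
    also have "\<dots> \<le> C * (R / \<rho>) powr q * measure \<mu> A"
      using assms(4,5) C_pos by (intro mult_left_mono finite_measure_mono) auto
    also have "C * (R / \<rho>) powr q = 1 / c powr q"
      using C_pos q_pos 3 assms(3)
      by (simp add: c_def powr_mult powr_divide powr_powr powr_minus divide_simps)
    finally have "c powr q \<le> measure \<mu> A / measure \<mu> V"
      using assms(7) 3 assms(3) C_pos by (simp add: c_def field_simps)
    then have "(c powr q) powr (1/q) \<le> (measure \<mu> A / measure \<mu> V) powr (1/q)"
      using q_pos by (intro powr_mono2) auto
    moreover have "(c powr q) powr (1/q) = c"
      using q_pos C_pos 3 assms(3) by (simp add: powr_powr c_def)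
    ultimately show ?thesis unfolding c_def by linarith
  qed
qed

end

lemma q_homogeneous_imp_homogeneous_measure:
  assumes "Metric_space X \<theta>" "finite_measure \<mu>" "q_homogeneous X \<theta> \<mu> q" "0 < q"
  shows "\<exists>C. homogeneous_measure X \<theta> \<mu> q C"
proof -
  interpret T: Metric_space X \<theta> by fact
  interpret finite_measure \<mu> by fact
  obtain C where C: "\<And>x r R. \<lbrakk>x \<in> X; 0 < r; r \<le> R\<rbrakk> \<Longrightarrow>
        emeasure \<mu> (T.mball x R) \<le> ennreal (C * (R / r) powr q) * emeasure \<mu> (T.mball x r)"
    using assms(3) unfolding q_homogeneous_def by blast
  have le: "measure \<mu> (T.mball x R) \<le> max C 1 * (R / r) powr q * measure \<mu> (T.mball x r)"
    if "x \<in> X" "0 < r" "r \<le> R" for x r R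
  proof -
    have "emeasure \<mu> (T.mball x R) \<le> ennreal (C * (R / r) powr q) * emeasure \<mu> (T.mball x r)"
      using that by (rule C)
    also have "\<dots> \<le> ennreal (max C 1 * (R / r) powr q) * emeasure \<mu> (T.mball x r)"
      by (intro mult_right_mono ennreal_leI) auto
    finally show ?thesis by (simp add: emeasure_eq_measure ennreal_mult''[symmetric])
  qed
  have "U \<in> sets \<mu>" if "openin T.mtopology U" for U
    using assms(3) that by (auto simp: q_homogeneous_def metric_borel_sets_def)
  with le assms have "homogeneous_measure X \<theta> \<mu> q (max C 1)"
    by (auto simp: homogeneous_measure_def homogeneous_measure_axioms_def q_homogeneous_def)
  then show ?thesis ..
qed

lemma G_adj_dist_lt:
  assumes "Metric_space X d" "G_adj X d a lam Xs n w w'"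
  shows "d (fst w) (fst w') < 2 * lam * a powi (- int n)"
proof -
  interpret Metric_space X d by fact
  obtain z where "z \<in> X" "fst w \<in> X" "fst w' \<in> X"
    and "d (fst w) z < lam * a powi (- int n)" "d (fst w') z < lam * a powi (- int n)"
    using assms(2) unfolding G_adj_def by auto
  then show ?thesis using triangle[of "fst w" z "fst w'"] commute[of z "fst w'"] by linarith
qed

lemma Gamma_first_exit:
  assumes "Metric_space X d" "hyp_filling X d a Xs" "\<gamma> \<in> Gamma X d a lam Xs k L v"
  defines "r \<equiv> a powi (- int (snd v))" and "y \<equiv> \<lambda>i. fst (\<gamma> ! i)"
  obtains j where "j < length \<gamma>" "fst v \<in> X"
    and "\<And>i. i < length \<gamma> \<Longrightarrow> y i \<in> X \<and> snd (\<gamma> ! i) = snd v + k"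
    and "d (fst v) (y 0) < r"
    and "\<And>i. i < j \<Longrightarrow> d (fst v) (y i) < L * r" "L * r \<le> d (fst v) (y j)"
    and "\<And>i. i < j \<Longrightarrow> d (y i) (y (Suc i)) < 2 * lam * a powi (- int (snd v + k))"
proof -
  interpret Metric_space X d by fact
  have "\<gamma> \<noteq> []" and in_S: "set \<gamma> \<subseteq> filling_S Xs (snd v + k)"
    and adj: "\<And>i. Suc i < length \<gamma> \<Longrightarrow> G_adj X d a lam Xs (snd v + k) (\<gamma> ! i) (\<gamma> ! Suc i)"
    and hd: "fst (hd \<gamma>) \<in> mball (fst v) r" and last: "fst (last \<gamma>) \<notin> mball (fst v) (L * r)"
    using assms(3) unfolding Gamma_def G_path_def vball_def r_def by auto
  have Xs_subset: "x \<in> X" if "x \<in> Xs n" for x n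
    using assms(2) that by (auto simp: hyp_filling_def max_separated_def)
  have path: "y i \<in> X \<and> snd (\<gamma> ! i) = snd v + k" if "i < length \<gamma>" for i
  proof -
    have "\<gamma> ! i \<in> filling_S Xs (snd v + k)" using in_S nth_mem[OF that] by blast
    then show ?thesis by (auto simp: filling_S_def y_def Xs_subset)
  qed
  have "fst v \<in> X" "d (fst v) (y 0) < r"
    using hd \<open>\<gamma> \<noteq> []\<close> by (auto simp: hd_conv_nth y_def)
  define P where "P j \<longleftrightarrow> j < length \<gamma> \<and> L * r \<le> d (fst v) (y j)" for j
  have "P (length \<gamma> - 1)"
    using last path[of "length \<gamma> - 1"] \<open>fst v \<in> X\<close> \<open>\<gamma> \<noteq> []\<close>
    by (auto simp: P_def y_def last_conv_nth)
  then have "P (LEAST j. P j)" by (rule LeastI)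
  moreover have "d (fst v) (y i) < L * r" if "i < (LEAST j. P j)" for i
    using not_less_Least[OF that] that calculation by (auto simp: P_def)
  moreover have "d (y i) (y (Suc i)) < 2 * lam * a powi (- int (snd v + k))"
    if "i < (LEAST j. P j)" for i
    using G_adj_dist_lt[OF assms(1) adj] that calculation by (auto simp: P_def y_def)
  ultimately show ?thesis
    using that path \<open>fst v \<in> X\<close> \<open>d (fst v) (y 0) < r\<close> unfolding P_def by blast
qed

locale quasisymmetric_homogeneous =
  quasisymmetric X d \<theta> \<eta> + homogeneous_measure X \<theta> \<mu> q C for X d \<theta> \<eta> \<mu> q C
begin

lemma measure_d_mball_pos:
  assumes "x \<in> X" "0 < r"
  shows "0 < measure \<mu> (D.mball x r)"
proof -
  obtain e where "0 < e" "T.mball x e \<subseteq> D.mball x r"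
    using openin_d_mball[of x r] assms unfolding T.openin_mtopology by force
  then have "measure \<mu> (T.mball x e) \<le> measure \<mu> (D.mball x r)"
    by (intro finite_measure_mono openin_measurable openin_d_mball)
  with measure_mball_pos[OF assms(1) \<open>0 < e\<close>] show ?thesis by linarith
qed

lemma measure_ratio_step_ge:
  assumes "x \<in> X" "y \<in> X" "y' \<in> X" "w \<in> X" "0 < r" "0 < s"
    and "d y y' \<le> M * s" "r \<le> d x w" "d x y \<le> d x w"
    and "1 \<le> M" "\<forall>t\<in>{0..M}. \<eta> t \<le> K" "1 \<le> K"
  shows "min 1 (C powr (-1/q) * \<theta> y y' / (3 * K\<^sup>2 * \<theta> x w))
           \<le> (measure \<mu> (D.mball y s) / measure \<mu> (D.mball x r)) powr (1/q)"
proof -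
  have "x \<noteq> w" using assms(1,5,8) by auto
  then have "0 < \<theta> x w" using assms(1,4) T.zero T.nonneg by (metis order_le_less)
  have "min 1 (C powr (-1/q) * (\<theta> y y' / K) / (3 * K * \<theta> x w))
           \<le> (measure \<mu> (D.mball y s) / measure \<mu> (D.mball x r)) powr (1/q)"
  proof (rule measure_ratio_powr_ge)
    show "T.mball y (\<theta> y y' / K) \<subseteq> D.mball y s"
      using assms by (intro theta_mball_subset_d_mball) auto
    show "D.mball x r \<subseteq> T.mball y (3 * K * \<theta> x w)"
      using assms by (intro d_mball_subset_theta_mball) auto
    show "0 < measure \<mu> (D.mball x r)"
      using assms by (intro measure_d_mball_pos)
  qed (use assms \<open>0 < \<theta> x w\<close> in \<open>auto intro: openin_measurable openin_d_mball\<close>)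
  then show ?thesis by (simp add: power2_eq_square mult.assoc)
qed

lemma chain_sum_measure_ratio_ge:
  assumes "x \<in> X" "0 < r" "0 < s" "1 < L"
    and "\<And>i. i \<le> j \<Longrightarrow> y i \<in> X"
    and "d x (y 0) < r" "\<And>i. i < j \<Longrightarrow> d x (y i) < L * r" "L * r \<le> d x (y j)"
    and "\<And>i. i < j \<Longrightarrow> d (y i) (y (Suc i)) \<le> M * s"
    and "L / (L - 1) \<le> M" "\<forall>t\<in>{0..M}. \<eta> t \<le> K" "1 \<le> K"
  shows "min 1 (C powr (-1/q) / (3 * K ^ 3))
           \<le> (\<Sum>i<j. (measure \<mu> (D.mball (y i) s) / measure \<mu> (D.mball x r)) powr (1/q))"
proof -
  define \<Theta> where "\<Theta> = \<theta> x (y j)"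
  define c1 where "c1 = C powr (-1/q)"
  define g where "g i = c1 * \<theta> (y i) (y (Suc i)) / (3 * K\<^sup>2 * \<Theta>)" for i
  have "1 \<le> L / (L - 1)" using assms(4) by (simp add: le_divide_eq)
  with assms(10) have "1 \<le> M" by linarith
  have "0 < L * r" "r < L * r" using assms(2,4) by simp_all
  then have "x \<noteq> y j" "y 0 \<noteq> y j" using assms(1,6,8) by auto
  then have "0 < \<Theta>" unfolding \<Theta>_def using assms(1,5) T.zero T.nonneg by (metis order_le_less order_refl)
  have "(L - 1) * d x (y j) \<le> L * d (y 0) (y j)"
    using assms by (intro D.escape_dist_le) auto
  also have "L * d (y 0) (y j) \<le> (L - 1) * (M * d (y 0) (y j))"
    using mult_right_mono[OF assms(10) D.nonneg[of "y 0" "y j"]] assms(4) by (simp add: field_simps)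
  finally have "d x (y j) \<le> M * d (y 0) (y j)"
    using assms(4) by simp
  then have "d (y j) x \<le> M * d (y j) (y 0)" by (simp add: D.commute)
  then have "\<Theta> \<le> K * \<theta> (y 0) (y j)"
    using theta_le_of_d_le[of "y j" x "y 0"] assms(1,5,11) \<open>x \<noteq> y j\<close> \<open>y 0 \<noteq> y j\<close>
    by (auto simp: \<Theta>_def T.commute)
  also have "\<dots> \<le> K * (\<Sum>i<j. \<theta> (y i) (y (Suc i)))"
    using T.triangle_chain assms(5,12) by (simp add: mult_left_mono)
  finally have "\<Theta> / K \<le> (\<Sum>i<j. \<theta> (y i) (y (Suc i)))"
    using assms(12) by (simp add: pos_divide_le_eq mult.commute)
  then have "c1 / (3 * K\<^sup>2 * \<Theta>) * (\<Theta> / K) \<le> c1 / (3 * K\<^sup>2 * \<Theta>) * (\<Sum>i<j. \<theta> (y i) (y (Suc i)))"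
    using \<open>0 < \<Theta>\<close> by (intro mult_left_mono) (auto simp: c1_def)
  moreover have "c1 / (3 * K\<^sup>2 * \<Theta>) * (\<Theta> / K) = c1 / (3 * K ^ 3)"
    using \<open>0 < \<Theta>\<close> assms(12) by (simp add: field_simps power2_eq_square power3_eq_cube)
  ultimately have "c1 / (3 * K ^ 3) \<le> (\<Sum>i<j. g i)"
    by (simp add: g_def sum_distrib_left sum_divide_distrib)
  then have "min 1 (c1 / (3 * K ^ 3)) \<le> min 1 (\<Sum>i<j. g i)" by simp
  also have "\<dots> \<le> (\<Sum>i<j. min 1 (g i))"
    using \<open>0 < \<Theta>\<close> by (intro min_one_sum_le_sum_min_one) (auto simp: g_def c1_def)
  also have "\<dots> \<le> (\<Sum>i<j. (measure \<mu> (D.mball (y i) s) / measure \<mu> (D.mball x r)) powr (1/q))"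
  proof (intro sum_mono)
    fix i assume "i \<in> {..<j}"
    then have "i < j" by simp
    have "d x (y i) \<le> d x (y j)" "r \<le> d x (y j)"
      using assms(7)[OF \<open>i < j\<close>] assms(8) \<open>r < L * r\<close> by linarith+
    then show "min 1 (g i) \<le> (measure \<mu> (D.mball (y i) s) / measure \<mu> (D.mball x r)) powr (1/q)"
      unfolding g_def c1_def \<Theta>_def using assms \<open>1 \<le> M\<close> \<open>i < j\<close>
      by (intro measure_ratio_step_ge) auto
  qed
  finally show ?thesis by (simp add: c1_def)
qed

lemma Gamma_sum_rho_ge:
  assumes "hyp_filling X d a Xs" "0 < a" "lam \<le> a" "1 < L"
    and "\<gamma> \<in> Gamma X d a lam Xs k L v"
    and "\<forall>t\<in>{0..max (2 * a) (L / (L - 1))}. \<eta> t \<le> K" "1 \<le> K"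
  shows "min 1 (C powr (-1/q) / (3 * K ^ 3)) \<le> (\<Sum>w\<leftarrow>\<gamma>. rho X d \<mu> q a lam Xs k L v w)"
proof -
  define r where "r = a powi (- int (snd v))"
  define s where "s = a powi (- int (snd v + k))"
  define y where "y i = fst (\<gamma> ! i)" for i
  obtain j where j: "j < length \<gamma>" "fst v \<in> X"
    and path: "\<And>i. i < length \<gamma> \<Longrightarrow> y i \<in> X \<and> snd (\<gamma> ! i) = snd v + k"
    and start: "d (fst v) (y 0) < r"
    and inside: "\<And>i. i < j \<Longrightarrow> d (fst v) (y i) < L * r"
    and exit: "L * r \<le> d (fst v) (y j)"
    and steps: "\<And>i. i < j \<Longrightarrow> d (y i) (y (Suc i)) < 2 * lam * s"
    using Gamma_first_exit[OF D.Metric_space_axioms assms(1,5)] unfolding r_def s_def y_def by metis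
  have "0 < r" "0 < s" using assms(2) by (simp_all add: r_def s_def)
  have rho_eq: "rho X d \<mu> q a lam Xs k L v (\<gamma> ! i)
      = (measure \<mu> (D.mball (y i) s) / measure \<mu> (D.mball (fst v) r)) powr (1/q)" if "i < j" for i
  proof -
    have balls: "vball X d a (\<gamma> ! i) = D.mball (y i) s" "vball X d a v = D.mball (fst v) r"
      using path[of i] that j by (simp_all add: vball_def y_def s_def r_def)
    have "y i \<in> D.mball (y i) s \<inter> D.mball (fst v) ((L + 1) * r)"
      using path[of i] inside[OF that] j \<open>0 < r\<close> \<open>0 < s\<close> that by (simp add: algebra_simps)
    then have "vball X d a (\<gamma> ! i) \<inter> D.mball (fst v) ((L + 1) * r) \<noteq> {}"
      using balls by blast
    moreover have "\<exists>\<gamma>'\<in>Gamma X d a lam Xs k L v. \<gamma> ! i \<in> set \<gamma>'"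
      using assms(5) that j by (intro bexI[of _ \<gamma>]) auto
    ultimately show ?thesis
      using balls unfolding rho_def r_def[symmetric] by simp
  qed
  have "min 1 (C powr (-1/q) / (3 * K ^ 3))
      \<le> (\<Sum>i<j. (measure \<mu> (D.mball (y i) s) / measure \<mu> (D.mball (fst v) r)) powr (1/q))"
  proof (rule chain_sum_measure_ratio_ge)
    show "d (y i) (y (Suc i)) \<le> max (2 * a) (L / (L - 1)) * s" if "i < j" for i
    proof -
      have "2 * lam * s \<le> 2 * a * s" using assms(3) \<open>0 < s\<close> by simp
      also have "\<dots> \<le> max (2 * a) (L / (L - 1)) * s" using \<open>0 < s\<close> by (intro mult_right_mono) auto
      finally show ?thesis using steps[OF that] by linarith
    qed
  qed (use j path start inside exit assms \<open>0 < r\<close> \<open>0 < s\<close> in auto)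
  also have "\<dots> = (\<Sum>i<j. rho X d \<mu> q a lam Xs k L v (\<gamma> ! i))"
    using rho_eq by simp
  also have "\<dots> \<le> (\<Sum>w\<leftarrow>\<gamma>. rho X d \<mu> q a lam Xs k L v w)"
    using j by (intro sum_nth_prefix_le_sum_list) (auto simp: rho_def)
  finally show ?thesis .
qed

end

theorem lemma4p5:
  fixes X :: "'a set" and d \<theta> :: "'a \<Rightarrow> 'a \<Rightarrow> real" and \<mu> :: "'a measure"
    and q a L :: real
  assumes "Metric_space X d"
    and "compact_space (Metric_space.mtopology X d)"
    and "mdiam X d = 1 / 2"
    and "a \<ge> 6" and "L > 1"
    and "in_J X d \<theta>"
    and "q > 0" and "q_homogeneous X \<theta> \<mu> q" and "finite_measure \<mu>"
  shows "\<exists>c > 0. \<exists>k0 :: nat. \<forall>lam. 6 \<le> lam \<and> lam \<le> a \<longrightarrow>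
           (\<forall>Xs. hyp_filling X d a Xs \<longrightarrow>
             (\<forall>k \<ge> k0. \<forall>v \<in> filling_all Xs. \<forall>\<gamma> \<in> Gamma X d a lam Xs k L v.
                (\<Sum>w\<leftarrow>\<gamma>. rho X d \<mu> q a lam Xs k L v w) \<ge> c))"
proof -
  obtain \<eta> \<eta>' where "homeomorphism {0::real..} {0..} \<eta> \<eta>'"
    and "\<forall>x\<in>X. \<forall>p\<in>X. \<forall>z\<in>X. x \<noteq> z \<longrightarrow> \<theta> x p / \<theta> x z \<le> \<eta> (d x p / d x z)"
    and "Metric_space X \<theta>"
    using assms(6) unfolding in_J_def by blast
  then have "quasisymmetric X d \<theta> \<eta>"
    using assms(1) by (simp add: quasisymmetric_def quasisymmetric_axioms_def homeomorphism_def)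
  moreover obtain C where "homogeneous_measure X \<theta> \<mu> q C"
    using q_homogeneous_imp_homogeneous_measure \<open>Metric_space X \<theta>\<close> assms(7-9) by blast
  ultimately interpret quasisymmetric_homogeneous X d \<theta> \<eta> \<mu> q C
    by (simp add: quasisymmetric_homogeneous_def)
  obtain K where "1 \<le> K" "\<forall>t\<in>{0..max (2 * a) (L / (L - 1))}. \<eta> t \<le> K"
    using eta_bounded by blast
  \<comment> \<open>\<open>k0 = 0\<close> already works.\<close>
  moreover have "0 < min 1 (C powr (-1/q) / (3 * K ^ 3))"
    using C_pos \<open>1 \<le> K\<close> by simp
  ultimately show ?thesis
    using Gamma_sum_rho_ge assms(4,5)
    by (intro exI[of _ "min 1 (C powr (-1/q) / (3 * K ^ 3))"] exI[of _ 0]) auto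
qed

end
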